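(* Let the setting below hold, let $\sigma,\tau>0$ satisfy $\sigma\tau\|A\|^2+\tau L\le 1$, and let $(x^{(k)},z^{(k)})$ be generated either by the Bregman primal Condat--V\~u algorithm \[x^{(k+1)}=\mathrm{prox}^{\phi_{\mathrm p}}_{\tau f}\big(x^{(k)},\tau A^Tz^{(k)}+\tau\nabla h(x^{(k)})\big),\quad z^{(k+1)}=\mathrm{prox}^{\phi_{\mathrm d}}_{\sigma g^*}\big(z^{(k)},-\sigma A(2x^{(k+1)}-x^{(k)})\big),\] in which case set $d=d_-$, $\tilde d=d_{\mathrm{pcv}}$; or by the Bregman dual Condat--V\~u algorithm \[z^{(k+1)}=\mathrm{prox}^{\phi_{\mathrm d}}_{\sigma g^*}\big(z^{(k)},-\sigma Ax^{(k)}\big),\quad x^{(k+1)}=\mathrm{prox}^{\phi_{\mathrm p}}_{\tau f}\big(x^{(k)},\tau A^T(2z^{(k+1)}-z^{(k)})+\tau\nabla h(x^{(k)})\big),\] in which case set $d=d_+$, $\tilde d=d_{\mathrm{dcv}}$; in both cases starting from $x^{(0)}\in\operatorname{int}(\operatorname{dom}\phi_{\mathrm p})\cap\operatorname{dom} h$, $z^{(0)}\in\operatorname{int}(\operatorname{dom}\phi_{\mathrm d})$. Then for every $k\ge0$, all $x\in\operatorname{dom} f\cap\operatorname{dom}\phi_{\mathrm p}$ and all $z\in\operatorname{dom} g^*\cap\operatorname{dom}\phi_{\mathrm d}$, \[\mathcal L(x^{(k+1)},z)-\mathcal L(x,z^{(k+1)})\le d(x,z;x^{(k)},z^{(k)})-d(x,z;x^{(k+1)},z^{(k+1)})-\tilde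 d(x^{(k+1)},z^{(k+1)};x^{(k)},z^{(k)}).\]
   Context: Setting: $f:\mathbb R^n\to\mathbb R\cup\{+\infty\}$, $g:\mathbb R^m\to\mathbb R\cup\{+\infty\}$, $h$ are closed convex functions, $h$ differentiable on its open convex domain, $f+h$ and $g$ proper, $A\in\mathbb R^{m\times n}$; $g^*$ is the conjugate of $g$. Lagrangian: $\mathcal L(x,z)=f(x)+h(x)+\langle z,Ax\rangle-g^*(z)$ (with value $+\infty$ if $x\notin\operatorname{dom}(f+h)$ and $-\infty$ if $x\in\operatorname{dom}(f+h)$, $z\notin\operatorname{dom}g^*$). A Bregman kernel $\phi$ is convex with $\operatorname{int}(\operatorname{dom}\phi)\neq\emptyset$, continuous on $\operatorname{dom}\phi$, continuously differentiable on $\operatorname{int}(\operatorname{dom}\phi)$; its distance is $d(x,y)=\phi(x)-\phi(y)-\langle\nabla\phi(y),x-y\rangle$ on $\operatorname{dom}\phi\times\operatorname{int}(\operatorname{dom}\phi)$, and $\mathrm{prox}^\phi_F(y,a)=\operatorname{argmin}_x\big(F(x)+\langle a,x\rangle+d(x,y)\big)$, assumed for every $a$ and $y\in\operatorname{int}(\operatorname{dom}\phi)$ to be a unique point of $\operatorname{int}(\operatorname{dom}\phi)$. Kernels $\phi_{\mathrm p}$ on $\mathbb R^n$ and $\phi_{\mathrm d}$ on $\mathbb R^m$ have distances $d_{\mathrm p},d_{\mathrm d}$ with $d_{\mathrm p}(x,x')\ge\frac12\|x-x'\|_{\mathrm p}^2$, $d_{\mathrm d}(z,z')\ge\frac12\|z-z'\|_{\mathrm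 d}^2$ for norms $\|\cdot\|_{\mathrm p},\|\cdot\|_{\mathrm d}$. Also $\operatorname{dom}\phi_{\mathrm p}\subseteq\operatorname{dom}h$ and $h(x)-h(x')-\langle\nabla h(x'),x-x'\rangle\le L\,d_{\mathrm p}(x,x')$ for all $(x,x')\in\operatorname{dom}d_{\mathrm p}$, for some $L>0$. $\|A\|=\sup_{u\ne0,v\ne0}\langle v,Au\rangle/(\|v\|_{\mathrm d}\|u\|_{\mathrm p})$. The optimality conditions $0\in\partial f(x)+\nabla h(x)+A^Tz$, $0\in\partial g^*(z)-Ax$ have a solution $(x^\star,z^\star)\in\operatorname{dom}\phi_{\mathrm p}\times\operatorname{dom}\phi_{\mathrm d}$. Distances: $d_\pm(x,z;x',z')=\frac1\tau d_{\mathrm p}(x,x')+\frac1\sigma d_{\mathrm d}(z,z')\pm\langle z-z',A(x-x')\rangle$, $d_{\mathrm{pcv}}(x,z;x',z')=d_-(x,z;x',z')-h(x)+h(x')+\langle\nabla h(x'),x-x'\rangle$, $d_{\mathrm{dcv}}(x,z;x',z')=d_+(x,z;x',z')-h(x)+h(x')+\langle\nabla h(x'),x-x'\rangle$. *)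

theory Defs
  imports "HOL-Analysis.Analysis" "HOL-Library.Extended_Real"
begin

definition edom :: "('a \<Rightarrow> ereal) \<Rightarrow> 'a set" where
  "edom F = {x. F x < \<infinity>}"

definition epigraph :: "('a \<Rightarrow> ereal) \<Rightarrow> ('a \<times> real) set" where
  "epigraph F = {(x, t). F x \<le> ereal t}"

definition econvex :: "('a::real_vector \<Rightarrow> ereal) \<Rightarrow> bool" where
  "econvex F \<longleftrightarrow> convex (epigraph F)"

definition closed_convex_fun :: "('a::real_normed_vector \<Rightarrow> ereal) \<Rightarrow> bool" where
  "closed_convex_fun F \<longleftrightarrow> convex (epigraph F) \<and> closed (epigraph F)"

definition eproper :: "('a \<Rightarrow> ereal) \<Rightarrow> bool" where
  "eproper F \<longleftrightarrow> (\<forall>x. F x \<noteq> -\<infinity>) \<and> (\<exists>x. F x < \<infinity>)"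

definition econj :: "('a::real_inner \<Rightarrow> ereal) \<Rightarrow> 'a \<Rightarrow> ereal" where
  "econj G z = (SUP y. ereal (z \<bullet> y) - G y)"

definition esubdiff :: "('a::real_inner \<Rightarrow> ereal) \<Rightarrow> 'a \<Rightarrow> 'a set" where
  "esubdiff F x = {s. F x < \<infinity> \<and> (\<forall>y. F y \<ge> F x + ereal (s \<bullet> (y - x)))}"

definition is_norm :: "('a::real_vector \<Rightarrow> real) \<Rightarrow> bool" where
  "is_norm N \<longleftrightarrow> (\<forall>x. N x \<ge> 0 \<and> (N x = 0 \<longleftrightarrow> x = 0)) \<and>
     (\<forall>c x. N (c *\<^sub>R x) = \<bar>c\<bar> * N x) \<and> (\<forall>x y. N (x + y) \<le> N x + N y)"

definition bregman_kernel :: "('a::{real_inner,euclidean_space} \<Rightarrow> ereal) \<Rightarrow> ('a \<Rightarrow> 'a) \<Rightarrow> bool" where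
  "bregman_kernel phi gphi \<longleftrightarrow>
     econvex phi \<and> (\<forall>x. phi x \<noteq> -\<infinity>) \<and> interior (edom phi) \<noteq> {} \<and>
     continuous_on (edom phi) phi \<and>
     (\<forall>y\<in>interior (edom phi). ((\<lambda>x. real_of_ereal (phi x)) has_derivative (\<lambda>v. gphi y \<bullet> v)) (at y)) \<and>
     continuous_on (interior (edom phi)) gphi"

text \<open>Bregman distance \<open>d(x,y)\<close> (meaningful for \<open>x \<in> dom phi\<close>, \<open>y \<in> int dom phi\<close>).\<close>
definition bdist :: "('a::real_inner \<Rightarrow> ereal) \<Rightarrow> ('a \<Rightarrow> 'a) \<Rightarrow> 'a \<Rightarrow> 'a \<Rightarrow> real" where
  "bdist phi gphi x y = real_of_ereal (phi x) - real_of_ereal (phi y) - gphi y \<bullet> (x - y)"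

text \<open>Objective of the Bregman proximal problem; \<open>+\<infinity>\<close> outside \<open>dom phi\<close>, where \<open>d\<close> is undefined.\<close>
definition prox_obj :: "('a::real_inner \<Rightarrow> ereal) \<Rightarrow> ('a \<Rightarrow> 'a) \<Rightarrow> ('a \<Rightarrow> ereal) \<Rightarrow> 'a \<Rightarrow> 'a \<Rightarrow> 'a \<Rightarrow> ereal" where
  "prox_obj phi gphi F y a x =
     (if x \<in> edom phi then F x + ereal (a \<bullet> x + bdist phi gphi x y) else \<infinity>)"

definition bprox :: "('a::real_inner \<Rightarrow> ereal) \<Rightarrow> ('a \<Rightarrow> 'a) \<Rightarrow> ('a \<Rightarrow> ereal) \<Rightarrow> 'a \<Rightarrow> 'a \<Rightarrow> 'a" where
  "bprox phi gphi F y a = (THE x. \<forall>w. prox_obj phi gphi F y a x \<le> prox_obj phi gphi F y a w)"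

definition prox_wellposed :: "('a::real_inner \<Rightarrow> ereal) \<Rightarrow> ('a \<Rightarrow> 'a) \<Rightarrow> ('a \<Rightarrow> ereal) \<Rightarrow> bool" where
  "prox_wellposed phi gphi F \<longleftrightarrow>
     (\<forall>a. \<forall>y\<in>interior (edom phi).
        (\<exists>!x. \<forall>w. prox_obj phi gphi F y a x \<le> prox_obj phi gphi F y a w) \<and>
        bprox phi gphi F y a \<in> interior (edom phi))"

definition opnorm_pd :: "(real^'n \<Rightarrow> real) \<Rightarrow> (real^'m \<Rightarrow> real) \<Rightarrow> real^'n^'m \<Rightarrow> real" where
  "opnorm_pd np nd A = Sup {(v \<bullet> (A *v u)) / (nd v * np u) | u v. u \<noteq> 0 \<and> v \<noteq> 0}"

definition lagr :: "(real^'n \<Rightarrow> ereal) \<Rightarrow> (real^'n \<Rightarrow> ereal) \<Rightarrow> (real^'m \<Rightarrow> ereal) \<Rightarrow> real^'n^'m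
                     \<Rightarrow> real^'n \<Rightarrow> real^'m \<Rightarrow> ereal" where
  "lagr f h g A x z =
     (if x \<notin> edom (\<lambda>x. f x + h x) then \<infinity>
      else if z \<notin> edom (econj g) then -\<infinity>
      else f x + h x + ereal (z \<bullet> (A *v x)) - econj g z)"

definition d_minus :: "real \<Rightarrow> real \<Rightarrow> real^'n^'m \<Rightarrow> (real^'n \<Rightarrow> real^'n \<Rightarrow> real) \<Rightarrow> (real^'m \<Rightarrow> real^'m \<Rightarrow> real)
     \<Rightarrow> real^'n \<Rightarrow> real^'m \<Rightarrow> real^'n \<Rightarrow> real^'m \<Rightarrow> real" where
  "d_minus \<tau> \<sigma> A dp dd x z x' z' = dp x x' / \<tau> + dd z z' / \<sigma> - (z - z') \<bullet> (A *v (x - x'))"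

definition d_plus :: "real \<Rightarrow> real \<Rightarrow> real^'n^'m \<Rightarrow> (real^'n \<Rightarrow> real^'n \<Rightarrow> real) \<Rightarrow> (real^'m \<Rightarrow> real^'m \<Rightarrow> real)
     \<Rightarrow> real^'n \<Rightarrow> real^'m \<Rightarrow> real^'n \<Rightarrow> real^'m \<Rightarrow> real" where
  "d_plus \<tau> \<sigma> A dp dd x z x' z' = dp x x' / \<tau> + dd z z' / \<sigma> + (z - z') \<bullet> (A *v (x - x'))"

definition d_pcv :: "real \<Rightarrow> real \<Rightarrow> real^'n^'m \<Rightarrow> (real^'n \<Rightarrow> real^'n \<Rightarrow> real) \<Rightarrow> (real^'m \<Rightarrow> real^'m \<Rightarrow> real)
     \<Rightarrow> (real^'n \<Rightarrow> ereal) \<Rightarrow> (real^'n \<Rightarrow> real^'n)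
     \<Rightarrow> real^'n \<Rightarrow> real^'m \<Rightarrow> real^'n \<Rightarrow> real^'m \<Rightarrow> real" where
  "d_pcv \<tau> \<sigma> A dp dd h gh x z x' z' = d_minus \<tau> \<sigma> A dp dd x z x' z'
     - real_of_ereal (h x) + real_of_ereal (h x') + gh x' \<bullet> (x - x')"

definition d_dcv :: "real \<Rightarrow> real \<Rightarrow> real^'n^'m \<Rightarrow> (real^'n \<Rightarrow> real^'n \<Rightarrow> real) \<Rightarrow> (real^'m \<Rightarrow> real^'m \<Rightarrow> real)
     \<Rightarrow> (real^'n \<Rightarrow> ereal) \<Rightarrow> (real^'n \<Rightarrow> real^'n)
     \<Rightarrow> real^'n \<Rightarrow> real^'m \<Rightarrow> real^'n \<Rightarrow> real^'m \<Rightarrow> real" where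
  "d_dcv \<tau> \<sigma> A dp dd h gh x z x' z' = d_plus \<tau> \<sigma> A dp dd x z x' z'
     - real_of_ereal (h x) + real_of_ereal (h x') + gh x' \<bullet> (x - x')"

end

theory Submission
  imports Defs
begin

(* Comparing the prox objective at its minimiser p
   with its values on the segment from p towards any point w of the kernel domain, and
   differentiating the kernel at p, gives the three-point inequality
     F(p) + <a,p> + d(p,y) + d(w,p) \<le> F(w) + <a,w> + d(w,y).
   Adding the primal and the dual three-point inequalities to the gradient inequality
   h(x) + <\<nabla>h(x), u - x> \<le> h(u) for the explicit step on h, the bilinear coupling terms
   regroup into the differences of d_\<plusminus> and the Bregman remainder of h. *)

lemma epigraph_segment_le:
  assumes "convex (epigraph F)" "F x \<le> ereal a" "F y \<le> ereal b" "0 \<le> t" "t \<le> 1"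
  shows "F (x + t *\<^sub>R (y - x)) \<le> ereal ((1 - t) * a + t * b)"
proof -
  have "(x, a) \<in> epigraph F" "(y, b) \<in> epigraph F"
    using assms(2,3) by (auto simp: epigraph_def)
  then have "(1 - t) *\<^sub>R (x, a) + t *\<^sub>R (y, b) \<in> epigraph F"
    using assms(1,4,5) by (intro convexD) auto
  moreover have "x + t *\<^sub>R (y - x) = (1 - t) *\<^sub>R x + t *\<^sub>R y"
    by (simp add: algebra_simps)
  ultimately show ?thesis
    by (simp add: epigraph_def)
qed

lemma econvex_cmult:
  assumes "c > 0" "econvex F"
  shows "econvex (\<lambda>x. ereal c * F x)"
  unfolding econvex_def
proof (rule convexI)
  fix p q :: "'a \<times> real" and s t :: real
  assume p: "p \<in> epigraph (\<lambda>x. ereal c * F x)" and q: "q \<in> epigraph (\<lambda>x. ereal c * F x)"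
    and st: "0 \<le> s" "0 \<le> t" "s + t = 1"
  obtain x a y b where pq: "p = (x, a)" "q = (y, b)"
    by fastforce
  have s: "s = 1 - t"
    using st by simp
  have div_le: "F w \<le> ereal (r / c)" if "ereal c * F w \<le> ereal r" for w r
    using that \<open>c > 0\<close> by (cases "F w") (auto simp: pos_le_divide_eq mult.commute)
  have "F x \<le> ereal (a / c)" "F y \<le> ereal (b / c)"
    using p q pq by (auto intro: div_le simp: epigraph_def)
  then have "F (x + t *\<^sub>R (y - x)) \<le> ereal ((1 - t) * (a / c) + t * (b / c))"
    using assms(2) st unfolding econvex_def by (intro epigraph_segment_le) auto
  then have "ereal c * F (x + t *\<^sub>R (y - x)) \<le> ereal c * ereal ((1 - t) * (a / c) + t * (b / c))"
    using \<open>c > 0\<close> by (intro ereal_mult_left_mono) auto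
  moreover have "x + t *\<^sub>R (y - x) = s *\<^sub>R x + t *\<^sub>R y"
    unfolding s by (simp add: algebra_simps)
  moreover have "c * ((1 - t) * (a / c) + t * (b / c)) = s * a + t * b"
    using \<open>c > 0\<close> unfolding s by (simp add: field_simps)
  ultimately show "s *\<^sub>R p + t *\<^sub>R q \<in> epigraph (\<lambda>x. ereal c * F x)"
    using pq by (simp add: epigraph_def)
qed

lemma econvex_econj: "econvex (econj g)"
  unfolding econvex_def
proof (rule convexI)
  fix p q :: "'a \<times> real" and s t :: real
  assume p: "p \<in> epigraph (econj g)" and q: "q \<in> epigraph (econj g)"
    and st: "0 \<le> s" "0 \<le> t" "s + t = 1"
  obtain z a v b where pq: "p = (z, a)" "q = (v, b)"
    by fastforce
  have s: "s = 1 - t"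
    using st by simp
  have epi_le: "ereal (w \<bullet> y) - g y \<le> ereal c" if "(w, c) \<in> epigraph (econj g)" for w c y
  proof -
    have "ereal (w \<bullet> y) - g y \<le> econj g w"
      unfolding econj_def by (rule SUP_upper) simp
    also have "\<dots> \<le> ereal c"
      using that by (simp add: epigraph_def)
    finally show ?thesis .
  qed
  have za: "ereal (z \<bullet> y) - g y \<le> ereal a" and vb: "ereal (v \<bullet> y) - g y \<le> ereal b" for y
    using epi_le p q pq by auto
  have "ereal ((s *\<^sub>R z + t *\<^sub>R v) \<bullet> y) - g y \<le> ereal (s * a + t * b)" for y
  proof (cases "g y")
    case (real r)
    have "(s *\<^sub>R z + t *\<^sub>R v) \<bullet> y - r = s * (z \<bullet> y - r) + t * (v \<bullet> y - r)"
      unfolding s by (simp add: algebra_simps inner_add_left)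
    also have "\<dots> \<le> s * a + t * b"
      using za[of y] vb[of y] st real by (intro add_mono mult_left_mono) auto
    finally show ?thesis
      using real by simp
  qed (use za[of y] in auto)
  then show "s *\<^sub>R p + t *\<^sub>R q \<in> epigraph (econj g)"
    using pq by (simp add: epigraph_def econj_def SUP_least)
qed

lemma econj_neq_minf:
  assumes "eproper g"
  shows "econj g z \<noteq> -\<infinity>"
proof -
  obtain y where "g y < \<infinity>" "g y \<noteq> -\<infinity>"
    using assms unfolding eproper_def by blast
  moreover have "ereal (z \<bullet> y) - g y \<le> econj g z"
    unfolding econj_def by (rule SUP_upper) simp
  ultimately show ?thesis
    by (cases "g y") auto
qed

lemma has_derivative_directional_le:
  fixes Q :: "'a::real_inner \<Rightarrow> real"
  assumes der: "(Q has_derivative (\<lambda>v. g \<bullet> v)) (at x)"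
    and bound: "\<And>t. 0 < t \<Longrightarrow> t < 1 \<Longrightarrow> Q (x + t *\<^sub>R w) - Q x \<le> t * K"
  shows "g \<bullet> w \<le> K"
proof -
  have "((\<lambda>t. x + t *\<^sub>R w) has_derivative (\<lambda>t. t *\<^sub>R w)) (at 0)"
    by (auto intro!: derivative_eq_intros)
  from has_derivative_compose[OF this, of Q "\<lambda>v. g \<bullet> v"]
  have "((\<lambda>t. Q (x + t *\<^sub>R w)) has_field_derivative (g \<bullet> w)) (at 0)"
    unfolding has_field_derivative_def using der
    by (auto elim!: has_derivative_eq_rhs simp: fun_eq_iff)
  then have "((\<lambda>t. (Q (x + t *\<^sub>R w) - Q x) / t) \<longlongrightarrow> g \<bullet> w) (at_right 0)"
    unfolding has_field_derivative_iff by (auto intro: tendsto_within_subset)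
  moreover have "\<forall>\<^sub>F t in at_right 0. (Q (x + t *\<^sub>R w) - Q x) / t \<le> K"
    using bound by (intro eventually_at_rightI[of 0 1]) (auto simp: divide_le_eq mult.commute)
  ultimately show ?thesis
    by (rule tendsto_upperbound) simp
qed

lemma has_derivative_directional_ge:
  fixes Q :: "'a::real_inner \<Rightarrow> real"
  assumes "(Q has_derivative (\<lambda>v. g \<bullet> v)) (at x)"
    and "\<And>t. 0 < t \<Longrightarrow> t < 1 \<Longrightarrow> t * K \<le> Q (x + t *\<^sub>R w) - Q x"
  shows "K \<le> g \<bullet> w"
proof -
  have "((\<lambda>y. - Q y) has_derivative (\<lambda>v. (- g) \<bullet> v)) (at x)"
    using has_derivative_minus[OF assms(1)] by simp
  then have "(- g) \<bullet> w \<le> - K"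
    by (rule has_derivative_directional_le) (use assms(2) in fastforce)
  then show ?thesis
    by simp
qed

lemma econvex_gradient_inequality:
  assumes cvx: "econvex H" and Hx: "H x = ereal hx" and Hu: "H u = ereal hu"
    and no_minf: "\<And>y. H y < \<infinity> \<Longrightarrow> H y \<noteq> -\<infinity>"
    and der: "((\<lambda>y. real_of_ereal (H y)) has_derivative (\<lambda>v. g \<bullet> v)) (at x)"
  shows "hx + g \<bullet> (u - x) \<le> hu"
proof -
  have "real_of_ereal (H (x + t *\<^sub>R (u - x))) - real_of_ereal (H x) \<le> t * (hu - hx)"
    if "0 < t" "t < 1" for t
  proof -
    have le: "H (x + t *\<^sub>R (u - x)) \<le> ereal ((1 - t) * hx + t * hu)"
      using cvx Hx Hu that unfolding econvex_def by (intro epigraph_segment_le) auto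
    then have "H (x + t *\<^sub>R (u - x)) < \<infinity>"
      by (rule le_less_trans) simp
    then have "H (x + t *\<^sub>R (u - x)) \<noteq> -\<infinity>"
      by (rule no_minf)
    with le Hx show ?thesis
      by (cases "H (x + t *\<^sub>R (u - x))") (auto simp: algebra_simps)
  qed
  then have "g \<bullet> (u - x) \<le> hu - hx"
    by (rule has_derivative_directional_le[OF der])
  then show ?thesis
    by simp
qed

lemma bprox_minimal:
  assumes "prox_wellposed phi gphi F" "y \<in> interior (edom phi)"
  shows "prox_obj phi gphi F y a (bprox phi gphi F y a) \<le> prox_obj phi gphi F y a w"
proof -
  have "\<exists>!x. \<forall>w. prox_obj phi gphi F y a x \<le> prox_obj phi gphi F y a w"
    using assms unfolding prox_wellposed_def by blast
  from theI'[OF this] show ?thesis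
    unfolding bprox_def by blast
qed

lemma bprox_in_interior:
  assumes "prox_wellposed phi gphi F" "y \<in> interior (edom phi)"
  shows "bprox phi gphi F y a \<in> interior (edom phi)"
  using assms unfolding prox_wellposed_def by blast

lemma bprox_iterates_in_interior:
  assumes "prox_wellposed phi gphi F" "y 0 \<in> interior (edom phi)"
    and "\<And>k. y (Suc k) = bprox phi gphi F (y k) (a k)"
  shows "y k \<in> interior (edom phi)"
  by (induction k) (simp_all add: assms bprox_in_interior)

lemma bprox_three_point:
  fixes phi :: "'a::euclidean_space \<Rightarrow> ereal"
  assumes kern: "bregman_kernel phi gphi" and cvx: "econvex F"
    and p: "p \<in> interior (edom phi)" and w: "w \<in> edom phi"
    and min: "\<And>w'. prox_obj phi gphi F y a p \<le> prox_obj phi gphi F y a w'"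
    and Fp: "F p = ereal fp" and Fw: "F w = ereal fw"
  shows "fp + a \<bullet> p + bdist phi gphi p y + bdist phi gphi w p \<le> fw + a \<bullet> w + bdist phi gphi w y"
proof -
  define P where "P x = real_of_ereal (phi x)" for x
  define C where "C = fw - fp + a \<bullet> (w - p) - gphi y \<bullet> (w - p)"
  have pd: "p \<in> edom phi"
    using p interior_subset by blast
  have phi_eq: "phi x = ereal (P x)" if "x \<in> edom phi" for x
    using that kern unfolding P_def bregman_kernel_def edom_def by (cases "phi x") auto
  have phi_convex: "convex (epigraph phi)"
    using kern by (simp add: bregman_kernel_def econvex_def)
  have der: "(P has_derivative (\<lambda>v. gphi p \<bullet> v)) (at p)"
    using kern p unfolding bregman_kernel_def P_def by blast
  have "t * (- C) \<le> P (p + t *\<^sub>R (w - p)) - P p" if t: "0 < t" "t < 1" for t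
  proof -
    define wt where "wt = p + t *\<^sub>R (w - p)"
    have "phi wt \<le> ereal ((1 - t) * P p + t * P w)"
      unfolding wt_def using pd w t by (intro epigraph_segment_le[OF phi_convex]) (auto simp: phi_eq)
    then have wtd: "wt \<in> edom phi"
      unfolding edom_def mem_Collect_eq by (rule le_less_trans) simp
    have Fwt: "F wt \<le> ereal ((1 - t) * fp + t * fw)"
      unfolding wt_def using cvx Fp Fw t unfolding econvex_def by (intro epigraph_segment_le) auto
    have "ereal (fp + (a \<bullet> p + bdist phi gphi p y)) \<le> F wt + ereal (a \<bullet> wt + bdist phi gphi wt y)"
      using min[of wt] pd wtd Fp by (simp add: prox_obj_def)
    also have "\<dots> \<le> ereal ((1 - t) * fp + t * fw) + ereal (a \<bullet> wt + bdist phi gphi wt y)"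
      by (rule add_right_mono[OF Fwt])
    finally have "fp + (a \<bullet> p + bdist phi gphi p y) \<le> (1 - t) * fp + t * fw + (a \<bullet> wt + bdist phi gphi wt y)"
      by simp
    then show ?thesis
      unfolding bdist_def C_def wt_def P_def
      by (simp add: algebra_simps inner_diff_right inner_add_right)
  qed
  then have "- C \<le> gphi p \<bullet> (w - p)"
    by (rule has_derivative_directional_ge[OF der])
  then show ?thesis
    unfolding bdist_def C_def inner_diff_right by linarith
qed

lemma bprox_scaled_three_point:
  fixes phi :: "'a::euclidean_space \<Rightarrow> ereal"
  assumes kern: "bregman_kernel phi gphi" and wp: "prox_wellposed phi gphi (\<lambda>x. ereal c * F x)"
    and cvx: "econvex F" and c: "c > 0"
    and y: "y \<in> interior (edom phi)" and w: "w \<in> edom F \<inter> edom phi"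
    and no_minf: "\<And>x. x \<in> edom phi \<Longrightarrow> F x \<noteq> -\<infinity>"
    and p: "p = bprox phi gphi (\<lambda>x. ereal c * F x) y a"
  shows "p \<in> edom F \<inter> interior (edom phi)"
    and "c * real_of_ereal (F p) + a \<bullet> p + bdist phi gphi p y + bdist phi gphi w p
      \<le> c * real_of_ereal (F w) + a \<bullet> w + bdist phi gphi w y"
proof -
  have p_int: "p \<in> interior (edom phi)"
    unfolding p by (rule bprox_in_interior[OF wp y])
  have min: "prox_obj phi gphi (\<lambda>x. ereal c * F x) y a p \<le> prox_obj phi gphi (\<lambda>x. ereal c * F x) y a w'"
    for w'
    unfolding p by (rule bprox_minimal[OF wp y])
  have pd: "p \<in> edom phi"
    using p_int interior_subset by blast
  obtain fw where Fw: "F w = ereal fw"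
    using w no_minf by (cases "F w") (auto simp: edom_def)
  have obj_p: "prox_obj phi gphi (\<lambda>x. ereal c * F x) y a p = ereal c * F p + ereal (a \<bullet> p + bdist phi gphi p y)"
    unfolding prox_obj_def by (rule if_P[OF pd])
  have obj_w: "prox_obj phi gphi (\<lambda>x. ereal c * F x) y a w = ereal (c * fw + (a \<bullet> w + bdist phi gphi w y))"
    using w unfolding prox_obj_def Fw by simp
  have "ereal c * F p + ereal (a \<bullet> p + bdist phi gphi p y) \<le> ereal (c * fw + (a \<bullet> w + bdist phi gphi w y))"
    using min[of w] unfolding obj_p obj_w .
  then have "F p \<noteq> \<infinity>"
    using c by (cases "F p") auto
  then obtain fp where Fp: "F p = ereal fp"
    using no_minf[OF pd] by (cases "F p") auto
  show "p \<in> edom F \<inter> interior (edom phi)"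
    using p_int Fp by (simp add: edom_def)
  show "c * real_of_ereal (F p) + a \<bullet> p + bdist phi gphi p y + bdist phi gphi w p
      \<le> c * real_of_ereal (F w) + a \<bullet> w + bdist phi gphi w y"
    by (rule bprox_three_point[OF kern econvex_cmult[OF c cvx] p_int _ min]) (use w Fp Fw in auto)
qed

lemma lagr_eq_ereal:
  assumes "f x = ereal a" "h x = ereal b" "econj g z = ereal c"
  shows "lagr f h g A x z = ereal (a + b + z \<bullet> (A *v x) - c)"
  using assms by (simp add: lagr_def edom_def)

lemma prox_pair_gap_bound:
  fixes A :: "real^'n^'m" and x u p ghx \<xi> :: "real^'n" and z v q \<zeta> :: "real^'m"
  assumes \<tau>: "\<tau> > 0" and \<sigma>: "\<sigma> > 0"
    and primal: "\<tau> * fp + (\<tau> *\<^sub>R (transpose A *v \<zeta>) + \<tau> *\<^sub>R ghx) \<bullet> p + d_px + d_up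
      \<le> \<tau> * fu + (\<tau> *\<^sub>R (transpose A *v \<zeta>) + \<tau> *\<^sub>R ghx) \<bullet> u + d_ux"
    and dual: "\<sigma> * gq + (- (\<sigma> *\<^sub>R (A *v \<xi>))) \<bullet> q + d_qz + d_vq
      \<le> \<sigma> * gv + (- (\<sigma> *\<^sub>R (A *v \<xi>))) \<bullet> v + d_vz"
    and grad: "hx + ghx \<bullet> (u - x) \<le> hu"
  shows "(fp + hp + v \<bullet> (A *v p) - gv) - (fu + hu + q \<bullet> (A *v u) - gq)
    \<le> (d_ux - d_up - d_px) / \<tau> + (d_vz - d_vq - d_qz) / \<sigma> + (hp - hx - ghx \<bullet> (p - x))
      + \<zeta> \<bullet> (A *v (u - p)) + (q - v) \<bullet> (A *v \<xi>) + v \<bullet> (A *v p) - q \<bullet> (A *v u)"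
proof -
  have "(fp - fu - (\<zeta> \<bullet> (A *v (u - p)) + ghx \<bullet> (u - p))) * \<tau> \<le> d_ux - d_up - d_px"
    using primal by (simp add: inner_add_left transpose_matrix_vector dot_lmul_matrix
        matrix_vector_mult_diff_distrib inner_diff_right algebra_simps)
  then have f_gap: "fp - fu - (\<zeta> \<bullet> (A *v (u - p)) + ghx \<bullet> (u - p)) \<le> (d_ux - d_up - d_px) / \<tau>"
    by (subst pos_le_divide_eq[OF \<tau>])
  have "(gq - gv - (q - v) \<bullet> (A *v \<xi>)) * \<sigma> \<le> d_vz - d_vq - d_qz"
    using dual by (simp add: inner_diff_left inner_commute algebra_simps)
  then have g_gap: "gq - gv - (q - v) \<bullet> (A *v \<xi>) \<le> (d_vz - d_vq - d_qz) / \<sigma>"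
    by (subst pos_le_divide_eq[OF \<sigma>])
  show ?thesis
    using f_gap g_gap grad unfolding inner_diff_right by linarith
qed

locale bregman_condat_vu =
  fixes f h :: "real^'n \<Rightarrow> ereal" and g :: "real^'m \<Rightarrow> ereal"
    and gh :: "real^'n \<Rightarrow> real^'n" and A :: "real^'n^'m"
    and phip :: "real^'n \<Rightarrow> ereal" and gphip :: "real^'n \<Rightarrow> real^'n"
    and phid :: "real^'m \<Rightarrow> ereal" and gphid :: "real^'m \<Rightarrow> real^'m"
    and \<sigma> \<tau> :: real
  assumes f_convex: "econvex f" and h_convex: "econvex h"
    and h_diff: "\<forall>x\<in>edom h. h x \<noteq> -\<infinity> \<and>
                   ((\<lambda>y. real_of_ereal (h y)) has_derivative (\<lambda>v. gh x \<bullet> v)) (at x)"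
    and fh_proper: "eproper (\<lambda>x. f x + h x)" and g_proper: "eproper g"
    and kp: "bregman_kernel phip gphip" and kd: "bregman_kernel phid gphid"
    and prox_p: "prox_wellposed phip gphip (\<lambda>x. ereal \<tau> * f x)"
    and prox_d: "prox_wellposed phid gphid (\<lambda>z. ereal \<sigma> * econj g z)"
    and dom_sub: "edom phip \<subseteq> edom h"
    and \<sigma>_pos: "\<sigma> > 0" and \<tau>_pos: "\<tau> > 0"
begin

abbreviation "dp \<equiv> bdist phip gphip"
abbreviation "dd \<equiv> bdist phid gphid"

lemma h_real:
  assumes "x \<in> edom phip"
  shows "h x = ereal (real_of_ereal (h x))"
proof -
  have "x \<in> edom h"
    using assms dom_sub by blast
  then have "h x \<noteq> -\<infinity>" "h x < \<infinity>"
    using h_diff by (auto simp: edom_def)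
  then show ?thesis
    by (cases "h x") auto
qed

lemma f_neq_minf:
  assumes "x \<in> edom phip"
  shows "f x \<noteq> -\<infinity>"
proof
  assume "f x = -\<infinity>"
  moreover have "f x + h x \<noteq> -\<infinity>"
    using fh_proper unfolding eproper_def by blast
  ultimately show False
    using h_real[OF assms] by simp
qed

lemma lagr_real:
  assumes x: "x \<in> edom f \<inter> edom phip" and z: "z \<in> edom (econj g)"
  shows "lagr f h g A x z = ereal (real_of_ereal (f x) + real_of_ereal (h x) + z \<bullet> (A *v x)
    - real_of_ereal (econj g z))"
proof (rule lagr_eq_ereal)
  show "f x = ereal (real_of_ereal (f x))"
    using x f_neq_minf by (cases "f x") (auto simp: edom_def)
  show "h x = ereal (real_of_ereal (h x))"
    using x h_real by blast
  show "econj g z = ereal (real_of_ereal (econj g z))"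
    using z econj_neq_minf[OF g_proper] by (cases "econj g z") (auto simp: edom_def)
qed

lemma h_gradient_inequality:
  assumes "x \<in> edom phip" "u \<in> edom phip"
  shows "real_of_ereal (h x) + gh x \<bullet> (u - x) \<le> real_of_ereal (h u)"
proof (rule econvex_gradient_inequality[OF h_convex h_real[OF assms(1)] h_real[OF assms(2)]])
  show "h y \<noteq> -\<infinity>" if "h y < \<infinity>" for y
    using that h_diff by (auto simp: edom_def)
  show "((\<lambda>y. real_of_ereal (h y)) has_derivative (\<lambda>v. gh x \<bullet> v)) (at x)"
    using assms(1) dom_sub h_diff by blast
qed

lemma lagr_gap_bound:
  assumes x: "x \<in> interior (edom phip)" and z: "z \<in> interior (edom phid)"
    and p: "p = bprox phip gphip (\<lambda>x. ereal \<tau> * f x) x (\<tau> *\<^sub>R (transpose A *v \<zeta>) + \<tau> *\<^sub>R gh x)"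
    and q: "q = bprox phid gphid (\<lambda>z. ereal \<sigma> * econj g z) z (- (\<sigma> *\<^sub>R (A *v \<xi>)))"
    and u: "u \<in> edom f \<inter> edom phip" and v: "v \<in> edom (econj g) \<inter> edom phid"
  shows "lagr f h g A p v - lagr f h g A u q
    \<le> ereal ((dp u x - dp u p - dp p x) / \<tau> + (dd v z - dd v q - dd q z) / \<sigma>
      + (real_of_ereal (h p) - real_of_ereal (h x) - gh x \<bullet> (p - x))
      + \<zeta> \<bullet> (A *v (u - p)) + (q - v) \<bullet> (A *v \<xi>) + v \<bullet> (A *v p) - q \<bullet> (A *v u))"
proof -
  note primal = bprox_scaled_three_point[OF kp prox_p f_convex \<tau>_pos x u f_neq_minf p]
  note dual = bprox_scaled_three_point[OF kd prox_d econvex_econj \<sigma>_pos z v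
      econj_neq_minf[OF g_proper] q]
  have x_dom: "x \<in> edom phip" and p_dom: "p \<in> edom f \<inter> edom phip"
    using x primal(1) interior_subset by auto
  note gap = prox_pair_gap_bound[OF \<tau>_pos \<sigma>_pos primal(2) dual(2)
      h_gradient_inequality[OF x_dom u[THEN IntD2]], of "real_of_ereal (h p)"]
  show ?thesis
    using gap lagr_real[OF p_dom v[THEN IntD1]] lagr_real[OF u dual(1)[THEN IntD1]] by simp
qed

lemma primal_step_bound:
  assumes "x \<in> interior (edom phip)" "z \<in> interior (edom phid)"
    and "p = bprox phip gphip (\<lambda>x. ereal \<tau> * f x) x (\<tau> *\<^sub>R (transpose A *v z) + \<tau> *\<^sub>R gh x)"
    and "q = bprox phid gphid (\<lambda>z. ereal \<sigma> * econj g z) z (- (\<sigma> *\<^sub>R (A *v (2 *\<^sub>R p - x))))"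
    and "u \<in> edom f \<inter> edom phip" "v \<in> edom (econj g) \<inter> edom phid"
  shows "lagr f h g A p v - lagr f h g A u q
    \<le> ereal (d_minus \<tau> \<sigma> A dp dd u v x z - d_minus \<tau> \<sigma> A dp dd u v p q
      - d_pcv \<tau> \<sigma> A dp dd h gh p q x z)"
  using lagr_gap_bound[OF assms]
  by (rule order_trans) (simp add: d_minus_def d_pcv_def algebra_simps diff_divide_distrib
      add_divide_distrib matrix_vector_mult_diff_distrib)

lemma dual_step_bound:
  assumes "x \<in> interior (edom phip)" "z \<in> interior (edom phid)"
    and "q = bprox phid gphid (\<lambda>z. ereal \<sigma> * econj g z) z (- (\<sigma> *\<^sub>R (A *v x)))"
    and "p = bprox phip gphip (\<lambda>x. ereal \<tau> * f x) x
      (\<tau> *\<^sub>R (transpose A *v (2 *\<^sub>R q - z)) + \<tau> *\<^sub>R gh x)"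
    and "u \<in> edom f \<inter> edom phip" "v \<in> edom (econj g) \<inter> edom phid"
  shows "lagr f h g A p v - lagr f h g A u q
    \<le> ereal (d_plus \<tau> \<sigma> A dp dd u v x z - d_plus \<tau> \<sigma> A dp dd u v p q
      - d_dcv \<tau> \<sigma> A dp dd h gh p q x z)"
  using lagr_gap_bound[OF assms(1,2,4,3,5,6)]
  by (rule order_trans) (simp add: d_plus_def d_dcv_def algebra_simps diff_divide_distrib
      add_divide_distrib matrix_vector_mult_diff_distrib)

lemma primal_condat_vu_bound:
  assumes x0: "xs 0 \<in> interior (edom phip)" and z0: "zs 0 \<in> interior (edom phid)"
    and x_step: "\<And>k. xs (Suc k) = bprox phip gphip (\<lambda>x. ereal \<tau> * f x) (xs k)
      (\<tau> *\<^sub>R (transpose A *v zs k) + \<tau> *\<^sub>R gh (xs k))"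
    and z_step: "\<And>k. zs (Suc k) = bprox phid gphid (\<lambda>z. ereal \<sigma> * econj g z) (zs k)
      (- (\<sigma> *\<^sub>R (A *v (2 *\<^sub>R xs (Suc k) - xs k))))"
    and "x \<in> edom f \<inter> edom phip" "z \<in> edom (econj g) \<inter> edom phid"
  shows "lagr f h g A (xs (Suc k)) z - lagr f h g A x (zs (Suc k))
    \<le> ereal (d_minus \<tau> \<sigma> A dp dd x z (xs k) (zs k) - d_minus \<tau> \<sigma> A dp dd x z (xs (Suc k)) (zs (Suc k))
      - d_pcv \<tau> \<sigma> A dp dd h gh (xs (Suc k)) (zs (Suc k)) (xs k) (zs k))"
  using bprox_iterates_in_interior[OF prox_p x0 x_step] bprox_iterates_in_interior[OF prox_d z0 z_step]
    x_step z_step assms(5,6)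
  by (rule primal_step_bound)

lemma dual_condat_vu_bound:
  assumes x0: "xs 0 \<in> interior (edom phip)" and z0: "zs 0 \<in> interior (edom phid)"
    and z_step: "\<And>k. zs (Suc k) = bprox phid gphid (\<lambda>z. ereal \<sigma> * econj g z) (zs k)
      (- (\<sigma> *\<^sub>R (A *v xs k)))"
    and x_step: "\<And>k. xs (Suc k) = bprox phip gphip (\<lambda>x. ereal \<tau> * f x) (xs k)
      (\<tau> *\<^sub>R (transpose A *v (2 *\<^sub>R zs (Suc k) - zs k)) + \<tau> *\<^sub>R gh (xs k))"
    and "x \<in> edom f \<inter> edom phip" "z \<in> edom (econj g) \<inter> edom phid"
  shows "lagr f h g A (xs (Suc k)) z - lagr f h g A x (zs (Suc k))
    \<le> ereal (d_plus \<tau> \<sigma> A dp dd x z (xs k) (zs k) - d_plus \<tau> \<sigma> A dp dd x z (xs (Suc k)) (zs (Suc k))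
      - d_dcv \<tau> \<sigma> A dp dd h gh (xs (Suc k)) (zs (Suc k)) (xs k) (zs k))"
  using bprox_iterates_in_interior[OF prox_p x0 x_step] bprox_iterates_in_interior[OF prox_d z0 z_step]
    z_step x_step assms(5,6)
  by (rule dual_step_bound)

end

theorem mainTheorem3:
  fixes f h :: "real^'n \<Rightarrow> ereal" and g :: "real^'m \<Rightarrow> ereal"
    and gh :: "real^'n \<Rightarrow> real^'n"
    and A :: "real^'n^'m"
    and phip :: "real^'n \<Rightarrow> ereal" and gphip :: "real^'n \<Rightarrow> real^'n"
    and phid :: "real^'m \<Rightarrow> ereal" and gphid :: "real^'m \<Rightarrow> real^'m"
    and np :: "real^'n \<Rightarrow> real" and nd :: "real^'m \<Rightarrow> real"
    and L \<sigma> \<tau> :: real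
    and xs :: "nat \<Rightarrow> real^'n" and zs :: "nat \<Rightarrow> real^'m"
  assumes f_cc: "closed_convex_fun f" and g_cc: "closed_convex_fun g" and h_cc: "closed_convex_fun h"
    and h_dom: "open (edom h)" "convex (edom h)"
    and h_diff: "\<forall>x\<in>edom h. h x \<noteq> -\<infinity> \<and>
                   ((\<lambda>y. real_of_ereal (h y)) has_derivative (\<lambda>v. gh x \<bullet> v)) (at x)"
    and fh_proper: "eproper (\<lambda>x. f x + h x)" and g_proper: "eproper g"
    and kp: "bregman_kernel phip gphip" and kd: "bregman_kernel phid gphid"
    and prox_p: "prox_wellposed phip gphip (\<lambda>x. ereal \<tau> * f x)"
    and prox_d: "prox_wellposed phid gphid (\<lambda>z. ereal \<sigma> * econj g z)"
    and np_norm: "is_norm np" and nd_norm: "is_norm nd"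
    and dp_strong: "\<forall>x\<in>edom phip. \<forall>x'\<in>interior (edom phip). bdist phip gphip x x' \<ge> (np (x - x'))\<^sup>2 / 2"
    and dd_strong: "\<forall>z\<in>edom phid. \<forall>z'\<in>interior (edom phid). bdist phid gphid z z' \<ge> (nd (z - z'))\<^sup>2 / 2"
    and dom_sub: "edom phip \<subseteq> edom h"
    and L_pos: "L > 0"
    and h_smooth: "\<forall>x\<in>edom phip. \<forall>x'\<in>interior (edom phip).
        real_of_ereal (h x) - real_of_ereal (h x') - gh x' \<bullet> (x - x') \<le> L * bdist phip gphip x x'"
    and saddle: "\<exists>xst zst. xst \<in> edom phip \<and> zst \<in> edom phid \<and>
        0 \<in> {s + gh xst + transpose A *v zst | s. s \<in> esubdiff f xst} \<and>
        0 \<in> {s - A *v xst | s. s \<in> esubdiff (econj g) zst}"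
    and \<sigma>_pos: "\<sigma> > 0" and \<tau>_pos: "\<tau> > 0"
    and step: "\<sigma> * \<tau> * (opnorm_pd np nd A)\<^sup>2 + \<tau> * L \<le> 1"
    and x0: "xs 0 \<in> interior (edom phip) \<inter> edom h"
    and z0: "zs 0 \<in> interior (edom phid)"
  shows
    "((\<forall>k. xs (Suc k) = bprox phip gphip (\<lambda>x. ereal \<tau> * f x) (xs k)
                           (\<tau> *\<^sub>R (transpose A *v zs k) + \<tau> *\<^sub>R gh (xs k)) \<and>
           zs (Suc k) = bprox phid gphid (\<lambda>z. ereal \<sigma> * econj g z) (zs k)
                           (- (\<sigma> *\<^sub>R (A *v (2 *\<^sub>R xs (Suc k) - xs k)))))
      \<longrightarrow> (\<forall>k. \<forall>x\<in>edom f \<inter> edom phip. \<forall>z\<in>edom (econj g) \<inter> edom phid.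
            lagr f h g A (xs (Suc k)) z - lagr f h g A x (zs (Suc k))
            \<le> ereal (d_minus \<tau> \<sigma> A (bdist phip gphip) (bdist phid gphid) x z (xs k) (zs k)
                   - d_minus \<tau> \<sigma> A (bdist phip gphip) (bdist phid gphid) x z (xs (Suc k)) (zs (Suc k))
                   - d_pcv \<tau> \<sigma> A (bdist phip gphip) (bdist phid gphid) h gh
                       (xs (Suc k)) (zs (Suc k)) (xs k) (zs k))))
     \<and>
     ((\<forall>k. zs (Suc k) = bprox phid gphid (\<lambda>z. ereal \<sigma> * econj g z) (zs k)
                           (- (\<sigma> *\<^sub>R (A *v xs k))) \<and>
           xs (Suc k) = bprox phip gphip (\<lambda>x. ereal \<tau> * f x) (xs k)
                           (\<tau> *\<^sub>R (transpose A *v (2 *\<^sub>R zs (Suc k) - zs k)) + \<tau> *\<^sub>R gh (xs k)))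
      \<longrightarrow> (\<forall>k. \<forall>x\<in>edom f \<inter> edom phip. \<forall>z\<in>edom (econj g) \<inter> edom phid.
            lagr f h g A (xs (Suc k)) z - lagr f h g A x (zs (Suc k))
            \<le> ereal (d_plus \<tau> \<sigma> A (bdist phip gphip) (bdist phid gphid) x z (xs k) (zs k)
                   - d_plus \<tau> \<sigma> A (bdist phip gphip) (bdist phid gphid) x z (xs (Suc k)) (zs (Suc k))
                   - d_dcv \<tau> \<sigma> A (bdist phip gphip) (bdist phid gphid) h gh
                       (xs (Suc k)) (zs (Suc k)) (xs k) (zs k))))"
proof -
  interpret bregman_condat_vu f h g gh A phip gphip phid gphid \<sigma> \<tau>
  proof unfold_locales
    show "econvex f" "econvex h"
      using f_cc h_cc by (simp_all add: closed_convex_fun_def econvex_def)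
  qed (fact h_diff fh_proper g_proper kp kd prox_p prox_d dom_sub \<sigma>_pos \<tau>_pos)+
  have x0': "xs 0 \<in> interior (edom phip)"
    using x0 by blast
  show ?thesis
    by (intro conjI impI allI ballI)
      (rule primal_condat_vu_bound[of xs zs] dual_condat_vu_bound[of xs zs]; use x0' z0 in auto)+
qed

end
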